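(* A real symmetric matrix $A$ has tropical rank one if and only if it has symmetric tropical rank one.
   Context: For an $r\times r$ submatrix of a real matrix $A$ with row index set $I$ and column index set $J$, each bijection $\rho:I\to J$ has value $\sum_{i\in I}A_{i,\rho(i)}$; the submatrix is tropically singular if the minimum value is attained by at least two distinct bijections. For symmetric $A$, the submatrix is symmetrically tropically singular if the minimum is attained by at least two distinct monomials $\prod_{i\in I}X_{i,\rho(i)}$, where variables are subject to the identification $X_{i,j}=X_{j,i}$. The tropical rank (resp. symmetric tropical rank) of $A$ is the largest $r$ such that $A$ has an $r\times r$ submatrix (arbitrary row and column sets) that is not tropically singular (resp. not symmetrically tropically singular). *)

theory Defs
  imports "HOL-Analysis.Analysis" "HOL-Library.Multiset"
begin

text \<open>Bijections rho : I -> J, normalised to be extensional (undefined outside I),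
  so that distinct bijections are distinct functions.\<close>
definition bijections :: "'m set \<Rightarrow> 'n set \<Rightarrow> ('m \<Rightarrow> 'n) set" where
  "bijections I J = {\<rho>. bij_betw \<rho> I J \<and> \<rho> \<in> extensional I}"

definition bij_value :: "real^'n^'m \<Rightarrow> 'm set \<Rightarrow> ('m \<Rightarrow> 'n) \<Rightarrow> real" where
  "bij_value A I \<rho> = (\<Sum>i\<in>I. A $ i $ (\<rho> i))"

definition trop_singular :: "real^'n^'m \<Rightarrow> 'm set \<Rightarrow> 'n set \<Rightarrow> bool" where
  "trop_singular A I J \<longleftrightarrow>
     (\<exists>\<rho>1 \<in> bijections I J. \<exists>\<rho>2 \<in> bijections I J. \<rho>1 \<noteq> \<rho>2 \<and>
        (\<forall>\<sigma> \<in> bijections I J. bij_value A I \<rho>1 \<le> bij_value A I \<sigma>) \<and>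
        (\<forall>\<sigma> \<in> bijections I J. bij_value A I \<rho>2 \<le> bij_value A I \<sigma>))"

text \<open>The monomial prod_{i in I} X_{i,rho i} under the identification X_{ij} = X_{ji}:
  a multiset of unordered index pairs, each pair represented as the set {i, rho i}.\<close>
definition sym_monomial :: "'n set \<Rightarrow> ('n \<Rightarrow> 'n) \<Rightarrow> 'n set multiset" where
  "sym_monomial I \<rho> = image_mset (\<lambda>i. {i, \<rho> i}) (mset_set I)"

definition sym_trop_singular :: "real^'n^'n \<Rightarrow> 'n set \<Rightarrow> 'n set \<Rightarrow> bool" where
  "sym_trop_singular A I J \<longleftrightarrow>
     (\<exists>\<rho>1 \<in> bijections I J. \<exists>\<rho>2 \<in> bijections I J.
        sym_monomial I \<rho>1 \<noteq> sym_monomial I \<rho>2 \<and>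
        (\<forall>\<sigma> \<in> bijections I J. bij_value A I \<rho>1 \<le> bij_value A I \<sigma>) \<and>
        (\<forall>\<sigma> \<in> bijections I J. bij_value A I \<rho>2 \<le> bij_value A I \<sigma>))"

definition tropical_rank :: "real^'n::finite^'m::finite \<Rightarrow> nat" where
  "tropical_rank A = Max {r. \<exists>I J. card I = r \<and> card J = r \<and> \<not> trop_singular A I J}"

definition sym_tropical_rank :: "real^'n::finite^'n \<Rightarrow> nat" where
  "sym_tropical_rank A = Max {r. \<exists>I J. card I = r \<and> card J = r \<and> \<not> sym_trop_singular A I J}"

definition symmetric_matrix :: "real^'n^'n \<Rightarrow> bool" where
  "symmetric_matrix A \<longleftrightarrow> (\<forall>i j. A $ i $ j = A $ j $ i)"

end

theory Submission
  imports Defs "HOL-Combinatorics.Transposition"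
begin

text \<open>Tropical rank one means that every 2 \<times> 2 submatrix is tropically singular, i.e. that A
  satisfies the four-point condition A i j + A k l = A i l + A k j. Then A i j differs from
  A i q + A p j by a constant, so all bijections between two index sets have the same value
  and every one of them attains the minimum. For index sets of size at least two, a bijection
  and its composite with a transposition already give distinct symmetric monomials, so
  every larger submatrix is symmetrically tropically singular. The converse holds because
  symmetric tropical singularity implies tropical singularity.\<close>

lemma Max_nonsingular_size_eq_1_iff:
  fixes P :: "'m::finite set \<Rightarrow> 'n set \<Rightarrow> bool"
  assumes "\<not> P {i} {j}"
  shows "Max {r. \<exists>I J. card I = r \<and> card J = r \<and> \<not> P I J} = 1 \<longleftrightarrow>
    (\<forall>I J. card I = card J \<longrightarrow> 2 \<le> card I \<longrightarrow> P I J)"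
proof -
  define S where "S = {r. \<exists>I J. card I = r \<and> card J = r \<and> \<not> P I J}"
  have "S \<subseteq> {..CARD('m)}"
    unfolding S_def using card_mono [OF finite_class.finite_UNIV subset_UNIV] by auto
  then have "finite S"
    using finite_subset by blast
  moreover have "1 \<in> S"
    unfolding S_def using assms by force
  ultimately have "Max S = 1 \<longleftrightarrow> (\<forall>r\<in>S. r \<le> 1)"
    using Max_eq_iff by blast
  also have "\<dots> \<longleftrightarrow> (\<forall>I J. card I = card J \<longrightarrow> 2 \<le> card I \<longrightarrow> P I J)"
    unfolding S_def by (auto; metis not_less_eq_eq numeral_2_eq_2)
  finally show ?thesis
    unfolding S_def .
qed

lemma bijections_singleton:
  "bijections {i} {j} = {\<lambda>x. if x = i then j else undefined}"
  by (auto simp: bijections_def bij_betw_def extensional_def fun_eq_iff)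

lemma not_trop_singular_singleton: "\<not> trop_singular A {i} {j}"
  unfolding trop_singular_def bijections_singleton by blast

lemma not_sym_trop_singular_singleton: "\<not> sym_trop_singular A {i} {j}"
  unfolding sym_trop_singular_def bijections_singleton by blast

lemma bijections_doubleton:
  assumes "i \<noteq> k" "j \<noteq> l"
  shows "bijections {i, k} {j, l} =
    {\<lambda>x. if x = i then j else if x = k then l else undefined,
     \<lambda>x. if x = i then l else if x = k then j else undefined}"
proof (intro equalityI subsetI)
  fix \<rho> assume "\<rho> \<in> bijections {i, k} {j, l}"
  then have \<rho>: "bij_betw \<rho> {i, k} {j, l}" "\<rho> \<in> extensional {i, k}"
    by (auto simp: bijections_def)
  then have "\<rho> i \<in> {j, l}" "\<rho> k \<in> {j, l}" "\<rho> i \<noteq> \<rho> k"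
    using assms(1) by (auto simp: bij_betw_def inj_on_def)
  with \<rho>(2) show "\<rho> \<in> {\<lambda>x. if x = i then j else if x = k then l else undefined,
     \<lambda>x. if x = i then l else if x = k then j else undefined}"
    by (auto simp: extensional_def fun_eq_iff)
qed (use assms in \<open>auto simp: bijections_def bij_betw_def inj_on_def extensional_def\<close>)

lemma trop_singular_doubleton_iff:
  assumes "i \<noteq> k" "j \<noteq> l"
  shows "trop_singular A {i, k} {j, l} \<longleftrightarrow> A$i$j + A$k$l = A$i$l + A$k$j"
proof -
  define f1 where "f1 = (\<lambda>x. if x = i then j else if x = k then l else undefined)"
  define f2 where "f2 = (\<lambda>x. if x = i then l else if x = k then j else undefined)"
  have "f1 \<noteq> f2"
    using assms(2) by (auto simp: f1_def f2_def fun_eq_iff)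
  moreover have "bij_value A {i, k} f1 = A$i$j + A$k$l" "bij_value A {i, k} f2 = A$i$l + A$k$j"
    using assms(1) by (simp_all add: bij_value_def f1_def f2_def)
  ultimately show ?thesis
    unfolding trop_singular_def bijections_doubleton [OF assms] f1_def [symmetric] f2_def [symmetric]
    by auto
qed

lemma bij_value_four_point:
  assumes four_point: "\<And>i j k l. A$i$j + A$k$l = A$i$l + A$k$j"
    and "\<rho> \<in> bijections I J"
  shows "bij_value A I \<rho> = (\<Sum>i\<in>I. A$i$q) + (\<Sum>j\<in>J. A$p$j) - real (card I) * A$p$q"
proof -
  have "bij_value A I \<rho> = (\<Sum>i\<in>I. A$i$q + A$p$(\<rho> i) - A$p$q)"
    unfolding bij_value_def
  proof (rule sum.cong)
    show "A$x$(\<rho> x) = A$x$q + A$p$(\<rho> x) - A$p$q" for x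
      using four_point [of x "\<rho> x" p q] by simp
  qed simp
  also have "\<dots> = (\<Sum>i\<in>I. A$i$q) + (\<Sum>i\<in>I. A$p$(\<rho> i)) - real (card I) * A$p$q"
    by (simp add: sum.distrib sum_subtractf)
  also have "(\<Sum>i\<in>I. A$p$(\<rho> i)) = (\<Sum>j\<in>J. A$p$j)"
    using assms(2) by (intro sum.reindex_bij_betw) (simp add: bijections_def)
  finally show ?thesis .
qed

lemma sym_monomial_transpose_neq:
  assumes "finite I" "inj_on \<rho> I" "i \<in> I" "k \<in> I" "i \<noteq> k"
  shows "sym_monomial I (\<rho> \<circ> Transposition.transpose i k) \<noteq> sym_monomial I \<rho>"
proof
  define M where "M f = image_mset (\<lambda>x. {x, f x}) (mset_set (I - {i, k}))" for f :: "'a \<Rightarrow> 'a"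
  have "mset_set I = add_mset i (add_mset k (mset_set (I - {i, k})))"
    using assms(1,3-5) mset_set.remove [of I i] mset_set.remove [of "I - {i}" k]
    by (simp add: Diff_insert2 [symmetric])
  then have split: "sym_monomial I f = {#{i, f i}, {k, f k}#} + M f" for f
    unfolding sym_monomial_def M_def by simp
  have "M (\<rho> \<circ> Transposition.transpose i k) = M \<rho>"
    unfolding M_def using assms(1) by (intro image_mset_cong) auto
  moreover assume "sym_monomial I (\<rho> \<circ> Transposition.transpose i k) = sym_monomial I \<rho>"
  ultimately have "{#{i, \<rho> k}, {k, \<rho> i}#} = {#{i, \<rho> i}, {k, \<rho> k}#}"
    unfolding split by (simp add: add_mset_commute)
  then have "{i, \<rho> i} \<in># {#{i, \<rho> k}, {k, \<rho> i}#}"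
    by simp
  moreover have "\<rho> i \<noteq> \<rho> k"
    using assms(2-5) by (auto dest: inj_onD)
  ultimately show False
    using assms(5) by (auto simp: doubleton_eq_iff)
qed

lemma restrict_in_bijections: "bij_betw f I J \<Longrightarrow> restrict f I \<in> bijections I J"
  by (simp add: bijections_def bij_betw_def inj_on_def)

lemma sym_monomial_restrict: "finite I \<Longrightarrow> sym_monomial I (restrict f I) = sym_monomial I f"
  unfolding sym_monomial_def by (intro image_mset_cong) auto

lemma bijections_sym_monomial_neq:
  assumes "card I = card J" "2 \<le> card I"
  obtains \<rho>1 \<rho>2 where "\<rho>1 \<in> bijections I J" "\<rho>2 \<in> bijections I J"
    "sym_monomial I \<rho>1 \<noteq> sym_monomial I \<rho>2"
proof -
  have "finite I" "finite J"
    using assms by (metis card.infinite not_numeral_le_zero)+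
  then obtain h where h: "bij_betw h I J"
    using assms(1) finite_same_card_bij by blast
  obtain i k where "i \<in> I" "k \<in> I" "i \<noteq> k"
    using assms(2) \<open>finite I\<close> card_le_Suc0_iff_eq [of I] by fastforce
  then have "bij_betw (h \<circ> Transposition.transpose i k) I J"
    using h by (intro bij_betw_trans [OF bij_betw_transpose_iff]) auto
  moreover have "sym_monomial I (h \<circ> Transposition.transpose i k) \<noteq> sym_monomial I h"
    using \<open>finite I\<close> h \<open>i \<in> I\<close> \<open>k \<in> I\<close> \<open>i \<noteq> k\<close>
    by (intro sym_monomial_transpose_neq) (auto simp: bij_betw_def)
  ultimately show thesis
    using that h \<open>finite I\<close> by (metis restrict_in_bijections sym_monomial_restrict)
qed

lemma sym_trop_singular_four_point:
  assumes "\<And>i j k l. A$i$j + A$k$l = A$i$l + A$k$j"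
    and "card I = card J" "2 \<le> card I"
  shows "sym_trop_singular A I J"
proof -
  obtain \<rho>1 \<rho>2 where \<rho>: "\<rho>1 \<in> bijections I J" "\<rho>2 \<in> bijections I J"
    "sym_monomial I \<rho>1 \<noteq> sym_monomial I \<rho>2"
    using bijections_sym_monomial_neq assms(2,3) by blast
  have "bij_value A I \<sigma> \<le> bij_value A I \<tau>" if "\<sigma> \<in> bijections I J" "\<tau> \<in> bijections I J" for \<sigma> \<tau>
    using that [THEN bij_value_four_point [OF assms(1)]] by (metis order_refl)
  with \<rho> show ?thesis
    unfolding sym_trop_singular_def by blast
qed

lemma trop_singular_if_sym_trop_singular: "sym_trop_singular A I J \<Longrightarrow> trop_singular A I J"
  unfolding sym_trop_singular_def trop_singular_def by metis

lemma tropical_rank_eq_1_iff: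
  "tropical_rank A = 1 \<longleftrightarrow> (\<forall>I J. card I = card J \<longrightarrow> 2 \<le> card I \<longrightarrow> trop_singular A I J)"
  unfolding tropical_rank_def
  by (rule Max_nonsingular_size_eq_1_iff [where P = "trop_singular A", OF not_trop_singular_singleton])

lemma sym_tropical_rank_eq_1_iff:
  "sym_tropical_rank A = 1 \<longleftrightarrow>
    (\<forall>I J. card I = card J \<longrightarrow> 2 \<le> card I \<longrightarrow> sym_trop_singular A I J)"
  unfolding sym_tropical_rank_def
  by (rule Max_nonsingular_size_eq_1_iff [where P = "sym_trop_singular A",
        OF not_sym_trop_singular_singleton])

theorem proposition2:
  fixes A :: "real^'n::finite^'n"
  assumes "symmetric_matrix A"
  shows "tropical_rank A = 1 \<longleftrightarrow> sym_tropical_rank A = 1"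
proof
  assume "tropical_rank A = 1"
  then have "trop_singular A I J" if "card I = card J" "2 \<le> card I" for I J
    using that tropical_rank_eq_1_iff by blast
  then have "A$i$j + A$k$l = A$i$l + A$k$j" for i j k l
    using trop_singular_doubleton_iff [of i k j l A] by (cases "i = k \<or> j = l") auto
  then show "sym_tropical_rank A = 1"
    unfolding sym_tropical_rank_eq_1_iff using sym_trop_singular_four_point by blast
next
  assume "sym_tropical_rank A = 1"
  then show "tropical_rank A = 1"
    unfolding tropical_rank_eq_1_iff sym_tropical_rank_eq_1_iff
    using trop_singular_if_sym_trop_singular by blast
qed

end
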